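(* Let $L=(L_{ij})$ be a Latin square of order $6$ on $\{1,\dots,6\}$ whose first row is $(1,2,3,4,5,6)$, whose rows $2,3$ begin with $(2,3,1)$ and $(3,1,2)$ respectively, and whose rows $4,5,6$ begin with $(4,5,6)$, $(5,6,4)$, $(6,4,5)$ respectively (the remaining entries being arbitrary subject to $L$ being a Latin square). Let $\Psi=(\psi_{ij})$ with $\psi_{ij}=\ket{L_{ij}}$, and let $\Phi=(\phi_{ij})$ be a quantum Latin square of order $6$ orthogonal to $\Psi$ with $\phi_{1j}=\ket{j}$ for $j=1,\dots,6$. Then there exist complex numbers $a_k,b_k,c_k$ ($k=1,\dots,6$) and complex scalars $\lambda_{ij}$ ($i\in\{4,5,6\}$, $j\in\{1,2,3\}$) such that, in coordinates with respect to $\ket{1},\dots,\ket{6}$, $\phi_{41}=\lambda_{41}(0,a_2,a_3,0,a_5,a_6)$, $\phi_{42}=\lambda_{42}(b_1,0,b_3,b_4,0,b_6)$, $\phi_{43}=\lambda_{43}(c_1,c_2,0,c_4,c_5,0)$, $\phi_{51}=\lambda_{51}(0,-c_2,c_3,-c_4,0,c_6)$, $\phi_{52}=\lambda_{52}(a_1,0,-a_3,a_4,-a_5,0)$, $\phi_{53}=\lambda_{53}(-b_1,b_2,0,0,b_5,-b_6)$, $\phi_{61}=\lambda_{61}(0,b_2,b_3,b_4,b_5,0)$, $\phi_{62}=\lambda_{62}(c_1,0,c_3,0,c_5,c_6)$, $\phi_{63}=\lambda_{63}(a_1,a_2,0,a_4,0,a_6)$.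
   Context: A quantum Latin square (QLS) of order $n$ is an $n\times n$ matrix $\Psi=(\psi_{ij})_{1\le i,j\le n}$ whose entries are unit vectors in $\mathbb C^n$ such that the entries of each row and the entries of each column form an orthonormal basis of $\mathbb C^n$. Two QLS $\Psi=(\psi_{ij})$ and $\Phi=(\phi_{ij})$ of order $n$ are orthogonal if $\{\psi_{ij}\otimes\phi_{ij}: 1\le i,j\le n\}$ is an orthonormal basis of $\mathbb C^n\otimes\mathbb C^n$. $\ket{1},\dots,\ket{n}$ denotes the standard orthonormal basis of $\mathbb C^n$. *)

theory Defs
  imports Complex_Main
begin

text \<open>Vectors of \<open>\<complex>\<^sup>n\<close> are represented as functions \<open>nat \<Rightarrow> complex\<close>,
  the coordinates with respect to the standard basis \<open>|1>,...,|n>\<close> being the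
  values at \<open>1..n\<close>. Vectors of \<open>\<complex>\<^sup>n \<otimes> \<complex>\<^sup>n\<close> are functions
  \<open>nat \<times> nat \<Rightarrow> complex\<close> with coordinates at \<open>{1..n} \<times> {1..n}\<close>.\<close>

definition ket :: "nat \<Rightarrow> nat \<Rightarrow> complex" where
  "ket j = (\<lambda>k. if k = j then 1 else 0)"

definition tensor :: "(nat \<Rightarrow> complex) \<Rightarrow> (nat \<Rightarrow> complex) \<Rightarrow> (nat \<times> nat \<Rightarrow> complex)" where
  "tensor u v = (\<lambda>(k, l). u k * v l)"

definition cinner_on :: "'k set \<Rightarrow> ('k \<Rightarrow> complex) \<Rightarrow> ('k \<Rightarrow> complex) \<Rightarrow> complex" where
  "cinner_on K u v = (\<Sum>k\<in>K. cnj (u k) * v k)"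

definition orthonormal_basis_on :: "'k set \<Rightarrow> 'i set \<Rightarrow> ('i \<Rightarrow> 'k \<Rightarrow> complex) \<Rightarrow> bool" where
  "orthonormal_basis_on K I vs \<longleftrightarrow>
     (\<forall>a\<in>I. \<forall>b\<in>I. cinner_on K (vs a) (vs b) = (if a = b then 1 else 0)) \<and>
     (\<forall>w :: 'k \<Rightarrow> complex. \<exists>c :: 'i \<Rightarrow> complex. \<forall>k\<in>K. w k = (\<Sum>a\<in>I. c a * vs a k))"

definition quantum_latin_square :: "nat \<Rightarrow> (nat \<Rightarrow> nat \<Rightarrow> nat \<Rightarrow> complex) \<Rightarrow> bool" where
  "quantum_latin_square n \<Psi> \<longleftrightarrow>
     (\<forall>i\<in>{1..n}. orthonormal_basis_on {1..n} {1..n} (\<lambda>j. \<Psi> i j)) \<and>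
     (\<forall>j\<in>{1..n}. orthonormal_basis_on {1..n} {1..n} (\<lambda>i. \<Psi> i j))"

definition orthogonal_qls :: "nat \<Rightarrow> (nat \<Rightarrow> nat \<Rightarrow> nat \<Rightarrow> complex) \<Rightarrow> (nat \<Rightarrow> nat \<Rightarrow> nat \<Rightarrow> complex) \<Rightarrow> bool" where
  "orthogonal_qls n \<Psi> \<Phi> \<longleftrightarrow>
     orthonormal_basis_on ({1..n} \<times> {1..n}) ({1..n} \<times> {1..n})
       (\<lambda>(i, j). tensor (\<Psi> i j) (\<Phi> i j))"

definition latin_square :: "nat \<Rightarrow> (nat \<Rightarrow> nat \<Rightarrow> nat) \<Rightarrow> bool" where
  "latin_square n L \<longleftrightarrow>
     (\<forall>i\<in>{1..n}. bij_betw (\<lambda>j. L i j) {1..n} {1..n}) \<and>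
     (\<forall>j\<in>{1..n}. bij_betw (\<lambda>i. L i j) {1..n} {1..n})"

definition has_coords :: "(nat \<Rightarrow> complex) \<Rightarrow> complex list \<Rightarrow> bool" where
  "has_coords v xs \<longleftrightarrow> (\<forall>k\<in>{1..length xs}. v k = xs ! (k - 1))"

end

theory Submission
  imports Defs
begin

text \<open>Entries of \<open>\<Phi>\<close> sharing a row, a column or (through the orthogonality with
  \<open>|L\<^sub>i\<^sub>j\<rangle>\<close>) a symbol form orthonormal bases, so their rank-one projections
  sum to the identity. The symbols 4, 5, 6 fill exactly the two off-diagonal
  \<open>3 \<times> 3\<close> blocks, and inclusion-exclusion over the first three columns, the
  symbols 4, 5, 6 and the first three rows shows that the nine lower left entries
  form a tight frame with bound \<open>3/2\<close>. They split into three triples, each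
  orthogonal to the other six entries, and three unit vectors forming such a
  frame are linearly dependent with nonzero coefficients. Orthogonality to the
  first row, the standard basis, makes \<open>\<phi>\<^sub>i\<^sub>j\<close> vanish at the coordinates
  \<open>j\<close> and \<open>L\<^sub>i\<^sub>j\<close>, and together with the dependence this yields the
  coordinate patterns.\<close>

lemma cinner_on_cong:
  assumes "\<And>k. k \<in> K \<Longrightarrow> u k = u' k" "\<And>k. k \<in> K \<Longrightarrow> v k = v' k"
  shows "cinner_on K u v = cinner_on K u' v'"
  using assms unfolding cinner_on_def by (intro sum.cong) auto

lemma cinner_on_commute: "cinner_on K v u = cnj (cinner_on K u v)"
  unfolding cinner_on_def by (simp add: mult_ac)

lemma cinner_on_scale: "cinner_on K (\<lambda>k. a * u k) (\<lambda>k. b * v k) = cnj a * b * cinner_on K u v"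
  unfolding cinner_on_def sum_distrib_left by (intro sum.cong) (auto simp: mult_ac)

lemma cinner_on_zero_left: "(\<And>k. k \<in> K \<Longrightarrow> u k = 0) \<Longrightarrow> cinner_on K u v = 0"
  unfolding cinner_on_def by simp

lemma cinner_on_delta_left:
  assumes "finite K" "j \<in> K"
  shows "cinner_on K (\<lambda>k. if k = j then 1 else 0) v = v j"
proof -
  have "cinner_on K (\<lambda>k. if k = j then 1 else 0) v = (\<Sum>k\<in>K. if k = j then v k else 0)"
    unfolding cinner_on_def by (intro sum.cong) auto
  then show ?thesis
    using assms by simp
qed

lemma cinner_on_tensor_ket:
  assumes "finite K" "s \<in> K" "t \<in> K"
  shows "cinner_on (K \<times> K) (tensor (ket s) u) (tensor (ket t) v)
           = (if s = t then cinner_on K u v else 0)"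
proof -
  have "cinner_on (K \<times> K) (tensor (ket s) u) (tensor (ket t) v)
      = (\<Sum>a\<in>K. \<Sum>b\<in>K. cnj (ket s a * u b) * (ket t a * v b))"
    unfolding cinner_on_def tensor_def by (simp add: sum.cartesian_product case_prod_unfold)
  also have "\<dots> = (\<Sum>a\<in>K. if a = s \<and> a = t then cinner_on K u v else 0)"
    unfolding cinner_on_def by (intro sum.cong) (auto simp: ket_def)
  also have "\<dots> = (if s = t then cinner_on K u v else 0)"
    using assms by (cases "s = t") (auto intro: sum.neutral)
  finally show ?thesis .
qed

lemma orthonormal_basis_on_cinner:
  assumes "orthonormal_basis_on K I vs" "a \<in> I" "b \<in> I"
  shows "cinner_on K (vs a) (vs b) = (if a = b then 1 else 0)"
  using assms unfolding orthonormal_basis_on_def by blast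

text \<open>The coefficients of the \<open>l\<close>-th standard basis vector in the basis
  \<open>vs\<close> are \<open>cnj (vs a l)\<close>.\<close>
lemma orthonormal_basis_on_resolution:
  assumes onb: "orthonormal_basis_on K I vs" and "finite K" "finite I" "k \<in> K" "l \<in> K"
  shows "(\<Sum>a\<in>I. vs a k * cnj (vs a l)) = (if k = l then 1 else 0)"
proof -
  have "\<exists>c. \<forall>m\<in>K. (if m = l then 1 else 0) = (\<Sum>a\<in>I. c a * vs a m)"
    using onb unfolding orthonormal_basis_on_def by (rule conjunct2[THEN spec])
  then obtain c where c: "\<And>m. m \<in> K \<Longrightarrow> (if m = l then 1 else 0) = (\<Sum>a\<in>I. c a * vs a m)"
    by blast
  have "cnj (vs b l) = c b" if "b \<in> I" for b
  proof -
    have "cnj (vs b l) = cnj (cinner_on K (\<lambda>m. if m = l then 1 else 0) (vs b))"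
      using assms by (simp add: cinner_on_delta_left)
    also have "\<dots> = cinner_on K (vs b) (\<lambda>m. if m = l then 1 else 0)"
      by (simp add: cinner_on_commute[of K "vs b"])
    also have "\<dots> = cinner_on K (vs b) (\<lambda>m. \<Sum>a\<in>I. c a * vs a m)"
      by (rule cinner_on_cong) (simp_all add: c)
    also have "\<dots> = (\<Sum>a\<in>I. c a * cinner_on K (vs b) (vs a))"
      unfolding cinner_on_def sum_distrib_left by (subst sum.swap) (simp add: mult_ac)
    also have "\<dots> = (\<Sum>a\<in>I. if a = b then c a else 0)"
      using onb that by (intro sum.cong) (auto simp: orthonormal_basis_on_cinner)
    also have "\<dots> = c b"
      using assms that by simp
    finally show ?thesis .
  qed
  then have "(\<Sum>a\<in>I. vs a k * cnj (vs a l)) = (\<Sum>a\<in>I. c a * vs a k)"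
    by (intro sum.cong) (auto simp: mult_ac)
  also have "\<dots> = (if k = l then 1 else 0)"
    using c[OF \<open>k \<in> K\<close>] by simp
  finally show ?thesis .
qed

lemma frame_reconstruction:
  assumes "finite K" "k \<in> K"
    and "\<And>k l. k \<in> K \<Longrightarrow> l \<in> K \<Longrightarrow> (\<Sum>t\<in>T. u t k * cnj (u t l)) = (if k = l then c else 0)"
  shows "(\<Sum>t\<in>T. u t k * cinner_on K (u t) v) = c * v k"
proof -
  have "(\<Sum>t\<in>T. u t k * cinner_on K (u t) v) = (\<Sum>l\<in>K. (\<Sum>t\<in>T. u t k * cnj (u t l)) * v l)"
    unfolding cinner_on_def sum_distrib_left sum_distrib_right
    by (subst sum.swap) (simp add: mult_ac)
  also have "\<dots> = (\<Sum>l\<in>K. if l = k then c * v l else 0)"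
    using assms by (intro sum.cong) auto
  also have "\<dots> = c * v k"
    using assms by simp
  finally show ?thesis .
qed

lemma triple_frame_cinner_nonzero:
  assumes u: "\<forall>k\<in>K. u k = 2 * (v k * cinner_on K v u + w k * cinner_on K w u)"
    and w: "\<forall>k\<in>K. w k = 2 * (u k * cinner_on K u w + v k * cinner_on K v w)"
    and unit: "cinner_on K u u = 1" "cinner_on K v v = 1" "cinner_on K w w = 1"
  shows "cinner_on K u w \<noteq> 0"
proof
  assume uw: "cinner_on K u w = 0"
  then have "cinner_on K w u = 0"
    by (simp add: cinner_on_commute[of K w])
  then have u_par: "\<forall>k\<in>K. u k = 2 * cinner_on K v u * v k"
    using u by (simp add: mult_ac)
  have w_par: "\<forall>k\<in>K. w k = 2 * cinner_on K v w * v k"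
    using w uw by (simp add: mult_ac)
  have "cinner_on K u w
      = cinner_on K (\<lambda>k. 2 * cinner_on K v u * v k) (\<lambda>k. 2 * cinner_on K v w * v k)"
    using u_par w_par by (intro cinner_on_cong) auto
  also have "\<dots> = 4 * cinner_on K u v * cinner_on K v w"
    by (simp add: cinner_on_scale unit cinner_on_commute[of K v u])
  finally have "cinner_on K v u = 0 \<or> cinner_on K v w = 0"
    using uw by (simp add: cinner_on_commute[of K u v])
  then show False
  proof
    assume "cinner_on K v u = 0"
    then have "cinner_on K u u = 0"
      using u_par by (intro cinner_on_zero_left) auto
    then show False using unit by simp
  next
    assume "cinner_on K v w = 0"
    then have "cinner_on K w w = 0"
      using w_par by (intro cinner_on_zero_left) auto
    then show False using unit by simp
  qed
qed

lemma triple_frame_dependent: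
  assumes "distinct [p, q, r]"
    and unit: "\<And>t. t \<in> {p, q, r} \<Longrightarrow> cinner_on K (v t) (v t) = 1"
    and frame: "\<And>t k. t \<in> {p, q, r} \<Longrightarrow> k \<in> K \<Longrightarrow>
      (\<Sum>s\<in>{p, q, r}. v s k * cinner_on K (v s) (v t)) = 3/2 * v t k"
  shows "\<exists>\<alpha> \<beta>. \<alpha> \<noteq> 0 \<and> \<beta> \<noteq> 0 \<and> (\<forall>k\<in>K. v r k = \<alpha> * v p k + \<beta> * v q k)"
proof -
  have expand: "v t k = 2 * (\<Sum>s\<in>{p, q, r} - {t}. v s k * cinner_on K (v s) (v t))"
    if "t \<in> {p, q, r}" "k \<in> K" for t k
  proof -
    have "3/2 * v t k = (\<Sum>s\<in>{p, q, r}. v s k * cinner_on K (v s) (v t))"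
      using frame[OF that] by simp
    also have "\<dots> = v t k * cinner_on K (v t) (v t)
        + (\<Sum>s\<in>{p, q, r} - {t}. v s k * cinner_on K (v s) (v t))"
      using that(1) by (intro sum.remove) auto
    finally show ?thesis
      using unit[OF that(1)] by (simp add: field_simps)
  qed
  have minus: "{p, q, r} - {p} = {q, r}" "{p, q, r} - {q} = {p, r}" "{p, q, r} - {r} = {p, q}"
    using assms(1) by auto
  have ep: "\<forall>k\<in>K. v p k = 2 * (v q k * cinner_on K (v q) (v p) + v r k * cinner_on K (v r) (v p))"
    using expand[of p] assms(1) by (simp add: minus)
  have eq: "\<forall>k\<in>K. v q k = 2 * (v p k * cinner_on K (v p) (v q) + v r k * cinner_on K (v r) (v q))"
    using expand[of q] assms(1) by (simp add: minus)
  have er: "\<forall>k\<in>K. v r k = 2 * (v p k * cinner_on K (v p) (v r) + v q k * cinner_on K (v q) (v r))"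
    using expand[of r] assms(1) by (simp add: minus)
  have "cinner_on K (v p) (v r) \<noteq> 0"
    by (rule triple_frame_cinner_nonzero[OF ep er]) (simp_all add: unit)
  moreover have "cinner_on K (v q) (v r) \<noteq> 0"
    by (rule triple_frame_cinner_nonzero[OF eq]) (use er in \<open>simp_all add: unit add.commute\<close>)
  ultimately show ?thesis
    using er by (intro exI[of _ "2 * cinner_on K (v p) (v r)"] exI[of _ "2 * cinner_on K (v q) (v r)"])
      (simp add: distrib_left)
qed

lemma linear_combination_coordinate:
  fixes u v w \<alpha> \<beta> :: complex
  assumes "w = \<alpha> * u + \<beta> * v" and "\<alpha> \<noteq> 0" "\<beta> \<noteq> 0"
  defines "a \<equiv> if w = 0 then \<alpha> * u else w"
  shows "v = 0 \<or> w = 0 \<Longrightarrow> u = 1 / \<alpha> * a" and "u = 0 \<Longrightarrow> v = 1 / \<beta> * a"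
    and "w = 0 \<Longrightarrow> v = 1 / \<beta> * - a" and "u = 0 \<or> v = 0 \<Longrightarrow> w = a"
  using assms by (auto simp: field_simps add_eq_0_iff)

lemma linear_combination_coordinates:
  fixes u v w :: "'k \<Rightarrow> complex"
  assumes comb: "\<And>k. k \<in> K \<Longrightarrow> w k = \<alpha> * u k + \<beta> * v k" and "\<alpha> \<noteq> 0" "\<beta> \<noteq> 0"
    and zero: "\<And>k. k \<in> U \<Longrightarrow> u k = 0" "\<And>k. k \<in> V \<Longrightarrow> v k = 0" "\<And>k. k \<in> W \<Longrightarrow> w k = 0"
    and cover: "K \<subseteq> U \<union> V \<union> W"
  shows "\<exists>\<kappa> \<mu> a. \<forall>k\<in>K.
    u k = \<kappa> * (if k \<in> U then 0 else a k) \<and>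
    v k = \<mu> * (if k \<in> V then 0 else if k \<in> W then - a k else a k) \<and>
    w k = (if k \<in> W then 0 else a k)"
proof -
  define a where "a k = (if w k = 0 then \<alpha> * u k else w k)" for k
  have "u k = 1 / \<alpha> * (if k \<in> U then 0 else a k) \<and>
    v k = 1 / \<beta> * (if k \<in> V then 0 else if k \<in> W then - a k else a k) \<and>
    w k = (if k \<in> W then 0 else a k)" if k: "k \<in> K" for k
  proof -
    note coordinate = linear_combination_coordinate[OF comb[OF k] \<open>\<alpha> \<noteq> 0\<close> \<open>\<beta> \<noteq> 0\<close>,
      folded a_def]
    have "u k = 1 / \<alpha> * (if k \<in> U then 0 else a k)"
    proof (cases "k \<in> U")
      case False
      then have "v k = 0 \<or> w k = 0"
        using cover k zero by blast
      then show ?thesis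
        using False coordinate(1) by simp
    qed (simp add: zero)
    moreover have "v k = 1 / \<beta> * (if k \<in> V then 0 else if k \<in> W then - a k else a k)"
    proof -
      consider "k \<in> V" | "k \<notin> V" "k \<in> W" | "k \<notin> V" "k \<notin> W" "k \<in> U"
        using cover k by blast
      then show ?thesis
        by cases (simp_all add: zero coordinate(2,3))
    qed
    moreover have "w k = (if k \<in> W then 0 else a k)"
    proof (cases "k \<in> W")
      case False
      then have "u k = 0 \<or> v k = 0"
        using cover k zero by blast
      then show ?thesis
        using False coordinate(4) by simp
    qed (simp add: zero)
    ultimately show ?thesis
      by blast
  qed
  then show ?thesis
    by blast
qed

lemma bij_betw_image_Diff_of_card:
  assumes "bij_betw f A A'" "B \<subseteq> A" "f ` B \<subseteq> C" "finite C" "card C = card B"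
  shows "f ` (A - B) = A' - C"
proof -
  have inj: "inj_on f A"
    using assms(1) by (rule bij_betw_imp_inj_on)
  have "card (f ` B) = card C"
    using card_image[OF inj_on_subset[OF inj assms(2)]] assms(5) by simp
  then have "f ` B = C"
    using assms(3,4) by (intro card_subset_eq)
  moreover have "f ` A = A'"
    using assms(1) by (rule bij_betw_imp_surj_on)
  ultimately show ?thesis
    using inj_on_image_set_diff[OF inj, of A B] assms(2) by simp
qed

text \<open>If the upper left \<open>m \<times> m\<close> block of a Latin square of order \<open>2m\<close> only
  uses the symbols \<open>1..m\<close>, the square splits into four Latin subsquares.\<close>
lemma latin_square_block_symbols:
  assumes latin: "latin_square (2 * m) L"
    and upper_left: "\<And>i j. i \<in> {1..m} \<Longrightarrow> j \<in> {1..m} \<Longrightarrow> L i j \<le> m"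
    and "i \<in> {1..2 * m}" "j \<in> {1..2 * m}"
  shows "m < L i j \<longleftrightarrow> (m < i \<longleftrightarrow> j \<le> m)"
proof -
  define A B where "A = {1..2 * m}" and "B = {1..m}"
  have "A - B = {m<..2 * m}"
    unfolding A_def B_def by auto
  then have sets: "B \<subseteq> A" "A - (A - B) = B" "card (A - B) = card B"
    unfolding A_def B_def by auto
  have row: "bij_betw (\<lambda>j. L i j) A A" and col: "bij_betw (\<lambda>i. L i j) A A"
    if "i \<in> A" "j \<in> A" for i j
    using latin that unfolding latin_square_def A_def by auto
  have UL: "L i j \<in> B" if "i \<in> B" "j \<in> B" for i j
  proof -
    have "L i j \<in> A"
      using row[of i j] that sets(1) bij_betwE by blast
    then show ?thesis
      using upper_left that unfolding A_def B_def by auto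
  qed
  have UR: "L i j \<in> A - B" if "i \<in> B" "j \<in> A - B" for i j
  proof -
    have "(\<lambda>j. L i j) ` (A - B) = A - B"
      using row UL sets that by (intro bij_betw_image_Diff_of_card) (auto simp: A_def)
    then show ?thesis using that by blast
  qed
  have LL: "L i j \<in> A - B" if "i \<in> A - B" "j \<in> B" for i j
  proof -
    have "(\<lambda>i. L i j) ` (A - B) = A - B"
      using col UL sets that by (intro bij_betw_image_Diff_of_card) (auto simp: A_def)
    then show ?thesis using that by blast
  qed
  have LR: "L i j \<in> B" if "i \<in> A - B" "j \<in> A - B" for i j
  proof -
    have "(\<lambda>i. L i j) ` (A - B) = A - (A - B)"
      using col UR sets that by (intro bij_betw_image_Diff_of_card) (auto simp: A_def)
    then show ?thesis using that sets by blast
  qed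
  have "i \<in> A" "j \<in> A"
    using assms(3,4) unfolding A_def by auto
  then show ?thesis
    using UL[of i j] UR[of i j] LL[of i j] LR[of i j]
    unfolding A_def B_def by (cases "i \<le> m"; cases "j \<le> m") auto
qed

locale qls_mate =
  fixes n :: nat and L :: "nat \<Rightarrow> nat \<Rightarrow> nat" and \<Phi> :: "nat \<Rightarrow> nat \<Rightarrow> nat \<Rightarrow> complex"
  assumes latin: "latin_square n L"
    and qls: "quantum_latin_square n \<Phi>"
    and orthogonal: "orthogonal_qls n (\<lambda>i j. ket (L i j)) \<Phi>"
begin

lemma symbol_range: "i \<in> {1..n} \<Longrightarrow> j \<in> {1..n} \<Longrightarrow> L i j \<in> {1..n}"
  using latin unfolding latin_square_def bij_betw_def by blast

lemma cinner_self: "i \<in> {1..n} \<Longrightarrow> j \<in> {1..n} \<Longrightarrow> cinner_on {1..n} (\<Phi> i j) (\<Phi> i j) = 1"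
  using qls orthonormal_basis_on_cinner unfolding quantum_latin_square_def by fastforce

lemma cinner_eq_0:
  assumes "i \<in> {1..n}" "j \<in> {1..n}" "i' \<in> {1..n}" "j' \<in> {1..n}" "(i, j) \<noteq> (i', j')"
    and "i = i' \<or> j = j' \<or> L i j = L i' j'"
  shows "cinner_on {1..n} (\<Phi> i j) (\<Phi> i' j') = 0"
  using assms(6)
proof (elim disjE)
  assume "i = i'"
  then show ?thesis
    using assms qls orthonormal_basis_on_cinner[of "{1..n}" "{1..n}" "\<Phi> i"]
    unfolding quantum_latin_square_def by auto
next
  assume "j = j'"
  then show ?thesis
    using assms qls orthonormal_basis_on_cinner[of "{1..n}" "{1..n}" "\<lambda>i. \<Phi> i j"]
    unfolding quantum_latin_square_def by auto
next
  assume same_symbol: "L i j = L i' j'"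
  have "cinner_on ({1..n} \<times> {1..n}) (tensor (ket (L i j)) (\<Phi> i j)) (tensor (ket (L i' j')) (\<Phi> i' j')) = 0"
    using orthonormal_basis_on_cinner[OF orthogonal[unfolded orthogonal_qls_def], of "(i, j)" "(i', j')"]
      assms by simp
  then show ?thesis
    using same_symbol cinner_on_tensor_ket symbol_range assms(1-4) by simp
qed

lemma row_resolution:
  "i \<in> {1..n} \<Longrightarrow> k \<in> {1..n} \<Longrightarrow> l \<in> {1..n} \<Longrightarrow>
    (\<Sum>j\<in>{1..n}. \<Phi> i j k * cnj (\<Phi> i j l)) = (if k = l then 1 else 0)"
  using qls unfolding quantum_latin_square_def by (intro orthonormal_basis_on_resolution) auto

lemma column_resolution:
  "j \<in> {1..n} \<Longrightarrow> k \<in> {1..n} \<Longrightarrow> l \<in> {1..n} \<Longrightarrow>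
    (\<Sum>i\<in>{1..n}. \<Phi> i j k * cnj (\<Phi> i j l)) = (if k = l then 1 else 0)"
  using qls unfolding quantum_latin_square_def by (intro orthonormal_basis_on_resolution) auto

lemma symbol_resolution:
  assumes "s \<in> {1..n}" "k \<in> {1..n}" "l \<in> {1..n}"
  shows "(\<Sum>i\<in>{1..n}. \<Sum>j\<in>{1..n}. if L i j = s then \<Phi> i j k * cnj (\<Phi> i j l) else 0)
    = (if k = l then 1 else 0)"
proof -
  have "(\<Sum>(i, j)\<in>{1..n} \<times> {1..n}.
      tensor (ket (L i j)) (\<Phi> i j) (s, k) * cnj (tensor (ket (L i j)) (\<Phi> i j) (s, l)))
    = (if k = l then 1 else 0)"
    using orthonormal_basis_on_resolution[OF orthogonal[unfolded orthogonal_qls_def], of "(s, k)" "(s, l)"]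
      assms by (simp add: case_prod_unfold)
  moreover have "tensor (ket (L i j)) (\<Phi> i j) (s, k) * cnj (tensor (ket (L i j)) (\<Phi> i j) (s, l))
      = (if L i j = s then \<Phi> i j k * cnj (\<Phi> i j l) else 0)" for i j
    by (simp add: tensor_def ket_def)
  ultimately show ?thesis
    by (simp add: sum.cartesian_product)
qed

lemma row_set_resolution:
  assumes "S \<subseteq> {1..n}" "k \<in> {1..n}" "l \<in> {1..n}"
  shows "(\<Sum>i\<in>{1..n}. \<Sum>j\<in>{1..n}. if i \<in> S then \<Phi> i j k * cnj (\<Phi> i j l) else 0)
    = of_nat (card S) * (if k = l then 1 else 0)"
proof -
  have "(\<Sum>i\<in>{1..n}. \<Sum>j\<in>{1..n}. if i \<in> S then \<Phi> i j k * cnj (\<Phi> i j l) else 0)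
      = (\<Sum>i\<in>{1..n}. if i \<in> S then (\<Sum>j\<in>{1..n}. \<Phi> i j k * cnj (\<Phi> i j l)) else 0)"
    by (intro sum.cong) auto
  also have "\<dots> = (\<Sum>i\<in>S. \<Sum>j\<in>{1..n}. \<Phi> i j k * cnj (\<Phi> i j l))"
    using assms(1) by (simp add: sum.inter_restrict[symmetric] Int_absorb1)
  also have "\<dots> = of_nat (card S) * (if k = l then 1 else 0)"
    using assms row_resolution by (simp add: subset_iff)
  finally show ?thesis .
qed

lemma column_set_resolution:
  assumes "S \<subseteq> {1..n}" "k \<in> {1..n}" "l \<in> {1..n}"
  shows "(\<Sum>i\<in>{1..n}. \<Sum>j\<in>{1..n}. if j \<in> S then \<Phi> i j k * cnj (\<Phi> i j l) else 0)
    = of_nat (card S) * (if k = l then 1 else 0)"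
proof -
  have "(\<Sum>i\<in>{1..n}. \<Sum>j\<in>{1..n}. if j \<in> S then \<Phi> i j k * cnj (\<Phi> i j l) else 0)
      = (\<Sum>j\<in>{1..n}. if j \<in> S then (\<Sum>i\<in>{1..n}. \<Phi> i j k * cnj (\<Phi> i j l)) else 0)"
    by (subst sum.swap) (intro sum.cong, auto)
  also have "\<dots> = (\<Sum>j\<in>S. \<Sum>i\<in>{1..n}. \<Phi> i j k * cnj (\<Phi> i j l))"
    using assms(1) by (simp add: sum.inter_restrict[symmetric] Int_absorb1)
  also have "\<dots> = of_nat (card S) * (if k = l then 1 else 0)"
    using assms column_resolution by (simp add: subset_iff)
  finally show ?thesis .
qed

lemma symbol_set_resolution:
  assumes "S \<subseteq> {1..n}" "k \<in> {1..n}" "l \<in> {1..n}"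
  shows "(\<Sum>i\<in>{1..n}. \<Sum>j\<in>{1..n}. if L i j \<in> S then \<Phi> i j k * cnj (\<Phi> i j l) else 0)
    = of_nat (card S) * (if k = l then 1 else 0)"
proof -
  have finite: "finite S"
    using assms(1) finite_subset by blast
  have "(\<Sum>i\<in>{1..n}. \<Sum>j\<in>{1..n}. if L i j \<in> S then \<Phi> i j k * cnj (\<Phi> i j l) else 0)
      = (\<Sum>i\<in>{1..n}. \<Sum>j\<in>{1..n}. \<Sum>s\<in>S. if L i j = s then \<Phi> i j k * cnj (\<Phi> i j l) else 0)"
    using finite by (intro sum.cong refl) simp
  also have "\<dots> = (\<Sum>i\<in>{1..n}. \<Sum>s\<in>S. \<Sum>j\<in>{1..n}. if L i j = s then \<Phi> i j k * cnj (\<Phi> i j l) else 0)"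
    by (rule sum.cong[OF refl], rule sum.swap)
  also have "\<dots> = (\<Sum>s\<in>S. \<Sum>i\<in>{1..n}. \<Sum>j\<in>{1..n}. if L i j = s then \<Phi> i j k * cnj (\<Phi> i j l) else 0)"
    by (rule sum.swap)
  also have "\<dots> = of_nat (card S) * (if k = l then 1 else 0)"
    using assms symbol_resolution by (simp add: subset_iff)
  finally show ?thesis .
qed

lemma off_diagonal_block_resolution:
  assumes "n = 2 * m"
    and block: "\<And>i j. i \<in> {1..n} \<Longrightarrow> j \<in> {1..n} \<Longrightarrow> m < L i j \<longleftrightarrow> (m < i \<longleftrightarrow> j \<le> m)"
    and k: "k \<in> {1..n}" and l: "l \<in> {1..n}"
  shows "(\<Sum>(i, j)\<in>{m<..n} \<times> {1..m}. \<Phi> i j k * cnj (\<Phi> i j l)) = (if k = l then of_nat m / 2 else 0)"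
proof -
  define \<Sigma> where "\<Sigma> P = (\<Sum>i\<in>{1..n}. \<Sum>j\<in>{1..n}. if P i j then \<Phi> i j k * cnj (\<Phi> i j l) else 0)"
    for P
  have halves: "{1..m} \<subseteq> {1..n}" "{m<..n} \<subseteq> {1..n}" "card {1..m} = m" "card {m<..n} = m"
    using assms(1) by auto
  txt \<open>The first \<open>m\<close> columns and the symbols above \<open>m\<close> cover the lower left
    block twice and the rest of the first \<open>m\<close> rows once.\<close>
  have "\<Sigma> (\<lambda>i j. j \<in> {1..m}) + \<Sigma> (\<lambda>i j. L i j \<in> {m<..n})
      = \<Sigma> (\<lambda>i j. i \<in> {1..m}) + 2 * \<Sigma> (\<lambda>i j. i \<in> {m<..n} \<and> j \<in> {1..m})"
    unfolding \<Sigma>_def sum.distrib[symmetric] sum_distrib_left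
    using symbol_range block by (intro sum.cong refl) auto
  moreover have "\<Sigma> (\<lambda>i j. i \<in> {1..m}) = of_nat m * (if k = l then 1 else 0)"
    unfolding \<Sigma>_def row_set_resolution[OF halves(1) k l] halves(3) ..
  moreover have "\<Sigma> (\<lambda>i j. j \<in> {1..m}) = of_nat m * (if k = l then 1 else 0)"
    unfolding \<Sigma>_def column_set_resolution[OF halves(1) k l] halves(3) ..
  moreover have "\<Sigma> (\<lambda>i j. L i j \<in> {m<..n}) = of_nat m * (if k = l then 1 else 0)"
    unfolding \<Sigma>_def symbol_set_resolution[OF halves(2) k l] halves(4) ..
  ultimately have "\<Sigma> (\<lambda>i j. i \<in> {m<..n} \<and> j \<in> {1..m}) = of_nat m / 2 * (if k = l then 1 else 0)"
    by (simp add: field_simps)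
  moreover have "\<Sigma> (\<lambda>i j. i \<in> {m<..n} \<and> j \<in> {1..m}) = (\<Sum>i\<in>{1..n}.
      if i \<in> {m<..n} then (\<Sum>j\<in>{1..n}. if j \<in> {1..m} then \<Phi> i j k * cnj (\<Phi> i j l) else 0) else 0)"
    unfolding \<Sigma>_def by (intro sum.cong) auto
  moreover have "\<dots> = (\<Sum>(i, j)\<in>{m<..n} \<times> {1..m}. \<Phi> i j k * cnj (\<Phi> i j l))"
    using Int_absorb1[OF halves(1)] Int_absorb1[OF halves(2)]
    unfolding sum.inter_restrict[OF finite_atLeastAtMost, symmetric] by (simp add: sum.cartesian_product)
  ultimately show ?thesis
    by (cases "k = l") simp_all
qed

lemma standard_first_row_zeros:
  assumes first_symbols: "\<forall>j\<in>{1..n}. L 1 j = j"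
    and first_kets: "\<forall>j\<in>{1..n}. \<forall>k\<in>{1..n}. \<Phi> 1 j k = ket j k"
    and "i \<in> {2..n}" "j \<in> {1..n}"
  shows "\<Phi> i j j = 0" "\<Phi> i j (L i j) = 0"
proof -
  have first_row: "\<Phi> i j s = cinner_on {1..n} (\<Phi> 1 s) (\<Phi> i j)" if "s \<in> {1..n}" for s
  proof -
    have "cinner_on {1..n} (\<Phi> 1 s) (\<Phi> i j) = cinner_on {1..n} (\<lambda>k. if k = s then 1 else 0) (\<Phi> i j)"
      using first_kets that by (intro cinner_on_cong) (auto simp: ket_def)
    then show ?thesis
      using that by (simp add: cinner_on_delta_left)
  qed
  have "1 \<in> {1..n}" "i \<in> {1..n}" "i \<noteq> 1" "L i j \<in> {1..n}"
    using assms(3,4) symbol_range by auto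
  then show "\<Phi> i j j = 0" "\<Phi> i j (L i j) = 0"
    using first_row cinner_eq_0 first_symbols assms(4) by auto
qed

end

locale normalized_qls_mate_6 = qls_mate 6 L \<Phi> for L \<Phi> +
  assumes first_symbols: "\<forall>j\<in>{1..6}. L 1 j = j"
    and first_kets: "\<forall>j\<in>{1..6}. \<forall>k\<in>{1..6}. \<Phi> 1 j k = ket j k"
    and upper_left_symbols: "\<And>i j. i \<in> {1..3} \<Longrightarrow> j \<in> {1..3} \<Longrightarrow> L i j \<le> 3"
begin

lemma lower_left_frame:
  assumes "k \<in> {1..6}"
  shows "(\<Sum>t\<in>{4, 5, 6} \<times> {1, 2, 3}. case_prod \<Phi> t k * cinner_on {1..6} (case_prod \<Phi> t) v) = 3/2 * v k"
proof (rule frame_reconstruction[OF _ assms])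
  fix k l :: nat
  assume "k \<in> {1..6}" "l \<in> {1..6}"
  moreover have "3 < L i j \<longleftrightarrow> (3 < i \<longleftrightarrow> j \<le> 3)" if "i \<in> {1..6}" "j \<in> {1..6}" for i j
    using latin_square_block_symbols[of 3 L] latin upper_left_symbols that by simp
  moreover have "{3<..6::nat} = {4, 5, 6}" "{1..3::nat} = {1, 2, 3}"
    by auto
  ultimately show "(\<Sum>t\<in>{4, 5, 6} \<times> {1, 2, 3}. case_prod \<Phi> t k * cnj (case_prod \<Phi> t l)) = (if k = l then 3/2 else 0)"
    using off_diagonal_block_resolution[of 3 k l] by (simp add: case_prod_unfold)
qed simp

text \<open>By the separation hypothesis each cell of the triple is orthogonal to the
  other six cells of the block, so the frame identity of the block restricts to
  the triple.\<close>
lemma lower_left_triple_dependent: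
  assumes "distinct [p, q, r]" and triple: "{p, q, r} \<subseteq> {4, 5, 6} \<times> {1, 2, 3}"
    and separated: "\<forall>s\<in>{4, 5, 6} \<times> {1, 2, 3}. \<forall>t\<in>{p, q, r}.
      s \<in> {p, q, r} \<or> fst s = fst t \<or> snd s = snd t \<or> case_prod L s = case_prod L t"
  shows "\<exists>\<alpha> \<beta>. \<alpha> \<noteq> 0 \<and> \<beta> \<noteq> 0 \<and>
    (\<forall>k\<in>{1..6}. case_prod \<Phi> r k = \<alpha> * case_prod \<Phi> p k + \<beta> * case_prod \<Phi> q k)"
proof (rule triple_frame_dependent[OF assms(1)])
  have cells: "t \<in> {1..6} \<times> {1..6}" if "t \<in> {4, 5, 6} \<times> {1, 2, 3}" for t :: "nat \<times> nat"
    using that by auto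
  fix t
  assume t: "t \<in> {p, q, r}"
  then show "cinner_on {1..6} (case_prod \<Phi> t) (case_prod \<Phi> t) = 1"
    using cells[OF subsetD[OF triple t]] cinner_self by (cases t) simp
  fix k :: nat
  assume k: "k \<in> {1..6}"
  have "(\<Sum>s\<in>{p, q, r}. case_prod \<Phi> s k * cinner_on {1..6} (case_prod \<Phi> s) (case_prod \<Phi> t))
      = (\<Sum>s\<in>{4, 5, 6} \<times> {1, 2, 3}. case_prod \<Phi> s k * cinner_on {1..6} (case_prod \<Phi> s) (case_prod \<Phi> t))"
  proof (intro sum.mono_neutral_left ballI)
    fix s
    assume s: "s \<in> {4, 5, 6} \<times> {1, 2, 3} - {p, q, r}"
    obtain i j i' j' where st: "s = (i, j)" "t = (i', j')"
      by (cases s, cases t)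
    have "s \<noteq> t"
      using s t by blast
    moreover have "s \<in> {1..6} \<times> {1..6}" "t \<in> {1..6} \<times> {1..6}"
      using s cells subsetD[OF triple t] by simp_all
    moreover have "fst s = fst t \<or> snd s = snd t \<or> case_prod L s = case_prod L t"
      using separated s t by blast
    ultimately have "cinner_on {1..6} (\<Phi> i j) (\<Phi> i' j') = 0"
      unfolding st by (intro cinner_eq_0) simp_all
    then have "cinner_on {1..6} (case_prod \<Phi> s) (case_prod \<Phi> t) = 0"
      by (simp add: st)
    then show "case_prod \<Phi> s k * cinner_on {1..6} (case_prod \<Phi> s) (case_prod \<Phi> t) = 0"
      by simp
  qed (fact triple | simp)+
  also have "\<dots> = 3/2 * case_prod \<Phi> t k"
    using lower_left_frame[OF k] .
  finally show "(\<Sum>s\<in>{p, q, r}. case_prod \<Phi> s k * cinner_on {1..6} (case_prod \<Phi> s) (case_prod \<Phi> t))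
      = 3/2 * case_prod \<Phi> t k" .
qed

lemma lower_left_triple_coordinates:
  assumes "distinct [p, q, r]" and triple: "{p, q, r} \<subseteq> {4, 5, 6} \<times> {1, 2, 3}"
    and "\<forall>s\<in>{4, 5, 6} \<times> {1, 2, 3}. \<forall>t\<in>{p, q, r}.
      s \<in> {p, q, r} \<or> fst s = fst t \<or> snd s = snd t \<or> case_prod L s = case_prod L t"
    and cover: "{1..6} \<subseteq> {snd p, case_prod L p} \<union> {snd q, case_prod L q} \<union> {snd r, case_prod L r}"
  shows "\<exists>\<kappa> \<mu> a. \<forall>k\<in>{1..6}.
    case_prod \<Phi> p k = \<kappa> * (if k \<in> {snd p, case_prod L p} then 0 else a k) \<and>
    case_prod \<Phi> q k = \<mu> * (if k \<in> {snd q, case_prod L q} then 0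
      else if k \<in> {snd r, case_prod L r} then - a k else a k) \<and>
    case_prod \<Phi> r k = (if k \<in> {snd r, case_prod L r} then 0 else a k)"
proof -
  obtain \<alpha> \<beta> where "\<alpha> \<noteq> 0" "\<beta> \<noteq> 0"
    and comb: "\<forall>k\<in>{1..6}. case_prod \<Phi> r k = \<alpha> * case_prod \<Phi> p k + \<beta> * case_prod \<Phi> q k"
    using lower_left_triple_dependent[OF assms(1-3)] by blast
  have zero: "case_prod \<Phi> t k = 0" if "t \<in> {p, q, r}" "k \<in> {snd t, case_prod L t}" for t k
  proof (cases t)
    case (Pair i j)
    then have "i \<in> {2..6}" "j \<in> {1..6}"
      using subsetD[OF triple that(1)] by auto
    then show ?thesis
      using standard_first_row_zeros[OF first_symbols first_kets] that(2) Pair by auto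
  qed
  show ?thesis
    using comb zero by (intro linear_combination_coordinates[OF _ \<open>\<alpha> \<noteq> 0\<close> \<open>\<beta> \<noteq> 0\<close> _ _ _ cover]) auto
qed

end

lemma has_coords_6_iff: "has_coords v [x1, x2, x3, x4, x5, x6] \<longleftrightarrow>
   v 1 = x1 \<and> v 2 = x2 \<and> v 3 = x3 \<and> v 4 = x4 \<and> v 5 = x5 \<and> v 6 = x6"
proof -
  have "{1..length [x1, x2, x3, x4, x5, x6]} = {1, 2, 3, 4, 5, 6::nat}"
    by auto
  then show ?thesis
    unfolding has_coords_def by (simp add: numeral_eq_Suc)
qed

theorem mainTheorem13:
  fixes L :: "nat \<Rightarrow> nat \<Rightarrow> nat" and \<Phi> :: "nat \<Rightarrow> nat \<Rightarrow> nat \<Rightarrow> complex"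
  assumes "latin_square 6 L"
    and "\<forall>j\<in>{1..6}. L 1 j = j"
    and "L 2 1 = 2" "L 2 2 = 3" "L 2 3 = 1"
    and "L 3 1 = 3" "L 3 2 = 1" "L 3 3 = 2"
    and "L 4 1 = 4" "L 4 2 = 5" "L 4 3 = 6"
    and "L 5 1 = 5" "L 5 2 = 6" "L 5 3 = 4"
    and "L 6 1 = 6" "L 6 2 = 4" "L 6 3 = 5"
    and "quantum_latin_square 6 \<Phi>"
    and "orthogonal_qls 6 (\<lambda>i j. ket (L i j)) \<Phi>"
    and "\<forall>j\<in>{1..6}. \<forall>k\<in>{1..6}. \<Phi> 1 j k = ket j k"
  shows "\<exists>(a :: nat \<Rightarrow> complex) (b :: nat \<Rightarrow> complex) (c :: nat \<Rightarrow> complex)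
           (lam :: nat \<Rightarrow> nat \<Rightarrow> complex).
     has_coords (\<Phi> 4 1) (map ((*) (lam 4 1)) [0, a 2, a 3, 0, a 5, a 6]) \<and>
     has_coords (\<Phi> 4 2) (map ((*) (lam 4 2)) [b 1, 0, b 3, b 4, 0, b 6]) \<and>
     has_coords (\<Phi> 4 3) (map ((*) (lam 4 3)) [c 1, c 2, 0, c 4, c 5, 0]) \<and>
     has_coords (\<Phi> 5 1) (map ((*) (lam 5 1)) [0, - c 2, c 3, - c 4, 0, c 6]) \<and>
     has_coords (\<Phi> 5 2) (map ((*) (lam 5 2)) [a 1, 0, - a 3, a 4, - a 5, 0]) \<and>
     has_coords (\<Phi> 5 3) (map ((*) (lam 5 3)) [- b 1, b 2, 0, 0, b 5, - b 6]) \<and>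
     has_coords (\<Phi> 6 1) (map ((*) (lam 6 1)) [0, b 2, b 3, b 4, b 5, 0]) \<and>
     has_coords (\<Phi> 6 2) (map ((*) (lam 6 2)) [c 1, 0, c 3, 0, c 5, c 6]) \<and>
     has_coords (\<Phi> 6 3) (map ((*) (lam 6 3)) [a 1, a 2, 0, a 4, 0, a 6])"
proof -
  have K: "{1..6::nat} = {1, 2, 3, 4, 5, 6}"
    by auto
  have upper_left: "L i j \<le> 3" if "i \<in> {1..3}" "j \<in> {1..3}" for i j
  proof -
    have "i \<in> {1, 2, 3}" "j \<in> {1, 2, 3}"
      using that by auto
    then show ?thesis
      using assms(2-8) by auto
  qed
  interpret normalized_qls_mate_6 L \<Phi>
    by unfold_locales (use assms upper_left in auto)
  obtain \<kappa>\<^sub>a \<mu>\<^sub>a a where A: "\<forall>k\<in>{1..6}.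
      \<Phi> 4 1 k = \<kappa>\<^sub>a * (if k \<in> {1, 4} then 0 else a k) \<and>
      \<Phi> 5 2 k = \<mu>\<^sub>a * (if k \<in> {2, 6} then 0 else if k \<in> {3, 5} then - a k else a k) \<and>
      \<Phi> 6 3 k = (if k \<in> {3, 5} then 0 else a k)"
    using lower_left_triple_coordinates[of "(4, 1)" "(5, 2)" "(6, 3)"] assms
    by (simp add: K[unfolded One_nat_def] cong: if_cong) blast
  obtain \<kappa>\<^sub>b \<mu>\<^sub>b b where B: "\<forall>k\<in>{1..6}.
      \<Phi> 4 2 k = \<kappa>\<^sub>b * (if k \<in> {2, 5} then 0 else b k) \<and>
      \<Phi> 5 3 k = \<mu>\<^sub>b * (if k \<in> {3, 4} then 0 else if k \<in> {1, 6} then - b k else b k) \<and>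
      \<Phi> 6 1 k = (if k \<in> {1, 6} then 0 else b k)"
    using lower_left_triple_coordinates[of "(4, 2)" "(5, 3)" "(6, 1)"] assms
    by (simp add: K[unfolded One_nat_def] cong: if_cong) blast
  obtain \<kappa>\<^sub>c \<mu>\<^sub>c c where C: "\<forall>k\<in>{1..6}.
      \<Phi> 4 3 k = \<kappa>\<^sub>c * (if k \<in> {3, 6} then 0 else c k) \<and>
      \<Phi> 5 1 k = \<mu>\<^sub>c * (if k \<in> {1, 5} then 0 else if k \<in> {2, 4} then - c k else c k) \<and>
      \<Phi> 6 2 k = (if k \<in> {2, 4} then 0 else c k)"
    using lower_left_triple_coordinates[of "(4, 3)" "(5, 1)" "(6, 2)"] assms
    by (simp add: K[unfolded One_nat_def] cong: if_cong) blast
  define lam where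
    "lam i j = (if i = 4 then [\<kappa>\<^sub>a, \<kappa>\<^sub>b, \<kappa>\<^sub>c] ! (j - 1) else if i = 5 then [\<mu>\<^sub>c, \<mu>\<^sub>a, \<mu>\<^sub>b] ! (j - 1) else 1)"
    for i j :: nat
  show ?thesis
    using A B C by (intro exI[of _ a] exI[of _ b] exI[of _ c] exI[of _ lam]) (simp add: has_coords_6_iff lam_def K)
qed

end
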